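(* Let $v\ge 2$ be an integer and $\theta\in[0,1]$. In the tipsy cop and drunken robber game on the complete graph $K_v$ with cop and robber starting at distinct vertices, let $X$ be the capture time measured in rounds, where a round consists of one robber move followed by one cop move (so $X=n$ if the capture occurs during the $n$-th round). Then \[ \mathbb{E}[X]=\frac{1}{\frac{1}{v-1}+\frac{v-2}{v-1}\left(\frac{1}{v-1}\theta+1-\theta\right)}=\frac{(v-1)^2}{(v-1)^2-\theta(v-2)^2}. \]
   Context: Tipsy cop and drunken robber game on a finite connected graph $G$: a cop and a robber are placed at distinct vertices. Moves are numbered $1,2,3,\dots$; the robber makes the odd-numbered moves and the cop the even-numbered moves, and on each move the mover must move to a vertex adjacent to its current vertex (staying put is not allowed). The robber always moves to a neighbor chosen uniformly at random. The cop, independently at each of her moves, with probability $\theta$ moves to a neighbor chosen uniformly at random, and with probability $1-\theta$ makes a directed move to a neighbor lying on a shortest path to the robber's current vertex (in particular onto the robber's vertex if it is adjacent). All random choices are independent. The robber is captured (and the game ends) as soon as both occupy the same vertex, whether the robber moves onto the cop or the cop moves onto the robber. *)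

theory Defs
  imports "HOL-Probability.Probability"
begin

text \<open>A finite graph is given by a vertex set V and an adjacency predicate E
(assumed symmetric and irreflexive where relevant).\<close>

definition nbrs :: "'a set \<Rightarrow> ('a \<Rightarrow> 'a \<Rightarrow> bool) \<Rightarrow> 'a \<Rightarrow> 'a set" where
  "nbrs V E x = {y \<in> V. E x y}"

definition edge_rel :: "'a set \<Rightarrow> ('a \<Rightarrow> 'a \<Rightarrow> bool) \<Rightarrow> ('a \<times> 'a) set" where
  "edge_rel V E = {(a, b). a \<in> V \<and> b \<in> V \<and> E a b}"

definition gdist :: "'a set \<Rightarrow> ('a \<Rightarrow> 'a \<Rightarrow> bool) \<Rightarrow> 'a \<Rightarrow> 'a \<Rightarrow> nat" where
  "gdist V E x y = (LEAST n. (x, y) \<in> edge_rel V E ^^ n)"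

definition toward :: "'a set \<Rightarrow> ('a \<Rightarrow> 'a \<Rightarrow> bool) \<Rightarrow> 'a \<Rightarrow> 'a \<Rightarrow> 'a set" where
  "toward V E c r = {y \<in> nbrs V E c. gdist V E y r + 1 = gdist V E c r}"

text \<open>State Some (cop, robber); None = captured.\<close>
definition round_step :: "'a set \<Rightarrow> ('a \<Rightarrow> 'a \<Rightarrow> bool) \<Rightarrow> real \<Rightarrow> 'a \<times> 'a \<Rightarrow> ('a \<times> 'a) option pmf" where
  "round_step V E \<theta> s = (case s of (c, r) \<Rightarrow>
     do { r' \<leftarrow> pmf_of_set (nbrs V E r);
          if r' = c then return_pmf None
          else do { b \<leftarrow> bernoulli_pmf \<theta>;
                    c' \<leftarrow> (if b then pmf_of_set (nbrs V E c) else pmf_of_set (toward V E c r'));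
                    return_pmf (if c' = r' then None else Some (c', r')) } })"

primrec state_after :: "'a set \<Rightarrow> ('a \<Rightarrow> 'a \<Rightarrow> bool) \<Rightarrow> real \<Rightarrow> 'a \<times> 'a \<Rightarrow> nat \<Rightarrow> ('a \<times> 'a) option pmf" where
  "state_after V E \<theta> s 0 = return_pmf (Some s)"
| "state_after V E \<theta> s (Suc n) =
     state_after V E \<theta> s n \<bind> (\<lambda>st. case st of None \<Rightarrow> return_pmf None | Some t \<Rightarrow> round_step V E \<theta> t)"

text \<open>P(X \<le> n): probability that capture has occurred within the first n rounds.\<close>
definition captured_by :: "'a set \<Rightarrow> ('a \<Rightarrow> 'a \<Rightarrow> bool) \<Rightarrow> real \<Rightarrow> 'a \<times> 'a \<Rightarrow> nat \<Rightarrow> real" where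
  "captured_by V E \<theta> s n = pmf (state_after V E \<theta> s n) None"

text \<open>P(X = n): probability that capture occurs during round n (n \<ge> 1).\<close>
definition capture_time_prob :: "'a set \<Rightarrow> ('a \<Rightarrow> 'a \<Rightarrow> bool) \<Rightarrow> real \<Rightarrow> 'a \<times> 'a \<Rightarrow> nat \<Rightarrow> real" where
  "capture_time_prob V E \<theta> s n =
     (if n = 0 then 0 else captured_by V E \<theta> s n - captured_by V E \<theta> s (n - 1))"

definition K_V :: "nat \<Rightarrow> nat set" where "K_V v = {0..<v}"
definition K_E :: "nat \<Rightarrow> nat \<Rightarrow> bool" where "K_E x y = (x \<noteq> y)"

end

theory Submission
  imports Defs
begin

text \<open>On \<open>K_v\<close> any two distinct vertices are adjacent, so after every round that does not end
the game the cop and the robber again occupy two distinct vertices, and the next round captures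
with one and the same probability \<open>p\<close>: the robber steps onto the cop with probability
\<open>1/(v-1)\<close>; otherwise a directed cop move always captures and a random one captures with
probability \<open>1/(v-1)\<close>. Hence the capture time is geometric with parameter \<open>p\<close> and its mean
is \<open>1/p\<close>.\<close>

lemma gdist_eq_0_iff:
  assumes "(x, y) \<in> (edge_rel V E)\<^sup>*"
  shows "gdist V E x y = 0 \<longleftrightarrow> x = y"
proof
  obtain n where "(x, y) \<in> edge_rel V E ^^ n"
    using assms rtrancl_imp_relpow by blast
  then have "(x, y) \<in> edge_rel V E ^^ gdist V E x y"
    unfolding gdist_def by (rule LeastI)
  then show "gdist V E x y = 0 \<Longrightarrow> x = y" by simp
next
  show "x = y \<Longrightarrow> gdist V E x y = 0"
    unfolding gdist_def by (rule Least_eq_0) simp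
qed

lemma gdist_adjacent:
  assumes "(x, y) \<in> edge_rel V E" and "x \<noteq> y"
  shows "gdist V E x y = 1"
  unfolding gdist_def
proof (rule Least_equality)
  fix n assume "(x, y) \<in> edge_rel V E ^^ n"
  with \<open>x \<noteq> y\<close> show "1 \<le> n" by (cases n) auto
qed (use assms in simp)

text \<open>The reachability hypothesis is needed because for unreachable vertices \<open>gdist\<close> is the
junk value of \<open>LEAST\<close>, which may be \<open>0\<close>.\<close>

lemma toward_adjacent:
  assumes "c \<in> V" and "r \<in> nbrs V E c" and "c \<noteq> r"
    and reach: "\<And>y. y \<in> nbrs V E c \<Longrightarrow> (y, r) \<in> (edge_rel V E)\<^sup>*"
  shows "toward V E c r = {r}"
proof -
  have "gdist V E c r = 1"
    using assms(1-3) by (intro gdist_adjacent) (auto simp: edge_rel_def nbrs_def)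
  then have "toward V E c r = {y \<in> nbrs V E c. y = r}"
    using reach by (auto simp: toward_def gdist_eq_0_iff)
  with \<open>r \<in> nbrs V E c\<close> show ?thesis by blast
qed

lemma set_pmf_state_after_subset:
  assumes "s \<in> S"
    and closed: "\<And>t. t \<in> S \<Longrightarrow> set_pmf (round_step V E \<theta> t) \<subseteq> insert None (Some ` S)"
  shows "set_pmf (state_after V E \<theta> s n) \<subseteq> insert None (Some ` S)"
proof (induction n)
  case 0
  with \<open>s \<in> S\<close> show ?case by simp
next
  case (Suc n)
  show ?case
  proof
    fix x assume "x \<in> set_pmf (state_after V E \<theta> s (Suc n))"
    then obtain st where "st \<in> set_pmf (state_after V E \<theta> s n)"
      and "x \<in> set_pmf (case st of None \<Rightarrow> return_pmf None | Some t \<Rightarrow> round_step V E \<theta> t)"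
      by auto
    with Suc.IH closed show "x \<in> insert None (Some ` S)" by (cases st) auto
  qed
qed

lemma captured_by_eq_geometric:
  assumes "s \<in> S"
    and closed: "\<And>t. t \<in> S \<Longrightarrow> set_pmf (round_step V E \<theta> t) \<subseteq> insert None (Some ` S)"
    and capture: "\<And>t. t \<in> S \<Longrightarrow> pmf (round_step V E \<theta> t) None = p"
  shows "captured_by V E \<theta> s n = 1 - (1 - p) ^ n"
proof (induction n)
  case 0
  then show ?case by (simp add: captured_by_def)
next
  case (Suc n)
  define M where "M = state_after V E \<theta> s n"
  define next_round where "next_round = (\<lambda>st. case st of None \<Rightarrow> return_pmf None
      | Some t \<Rightarrow> round_step V E \<theta> t)"
  have "pmf (next_round st) None = p + (1 - p) * indicator {None} st" if "st \<in> set_pmf M" for st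
    using that set_pmf_state_after_subset[OF \<open>s \<in> S\<close> closed, of n] capture
    by (auto simp: M_def next_round_def)
  then have "captured_by V E \<theta> s (Suc n) = (\<integral>st. p + (1 - p) * indicator {None} st \<partial>M)"
    unfolding captured_by_def state_after.simps M_def[symmetric] next_round_def[symmetric] pmf_bind
    by (intro integral_cong_AE) (auto simp: AE_measure_pmf_iff)
  also have "\<dots> = p + (1 - p) * captured_by V E \<theta> s n"
  proof -
    have "integrable M (\<lambda>st. (1 - p) * indicator {None} st)"
      by (intro integrable_mult_right integrable_real_indicator) (simp_all add: less_top[symmetric])
    then show ?thesis
      by (simp add: M_def captured_by_def measure_pmf_single)
  qed
  finally show ?case
    using Suc.IH by (simp add: algebra_simps)
qed

lemma shifted_geometric_sums:
  fixes p :: real and f :: "nat \<Rightarrow> real"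
  assumes "0 < p" and "p \<le> 1" and "f 0 = 0" and f_Suc: "\<And>n. f (Suc n) = p * (1 - p) ^ n"
  shows "f sums 1" and "(\<lambda>n. real n * f n) sums (1 / p)"
proof -
  have q: "norm (1 - p) < 1" using assms(1,2) by simp
  have "(\<lambda>n. f (Suc n)) sums (p * (1 / (1 - (1 - p))))"
    unfolding f_Suc by (intro sums_mult geometric_sums q)
  then show "f sums 1"
    using \<open>0 < p\<close> \<open>f 0 = 0\<close> sums_Suc_iff[of f] by simp
  have "(\<lambda>n. p * (real (Suc n) * (1 - p) ^ n)) sums (p * (1 / (1 - (1 - p))\<^sup>2))"
    by (intro sums_mult geometric_deriv_sums q)
  then have "(\<lambda>n. real (Suc n) * f (Suc n)) sums (1 / p)"
    using \<open>0 < p\<close> by (simp add: f_Suc power2_eq_square algebra_simps)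
  then show "(\<lambda>n. real n * f n) sums (1 / p)"
    using sums_Suc_iff[of "\<lambda>n. real n * f n"] by simp
qed

definition K_states :: "nat \<Rightarrow> (nat \<times> nat) set" where
  "K_states v = {(c, r). c \<in> K_V v \<and> r \<in> K_V v \<and> c \<noteq> r}"

definition K_capture_prob :: "nat \<Rightarrow> real \<Rightarrow> real" where
  "K_capture_prob v \<theta> =
     1 / (real v - 1) + (real v - 2) / (real v - 1) * (1 / (real v - 1) * \<theta> + 1 - \<theta>)"

lemma nbrs_K: "nbrs (K_V v) K_E x = K_V v - {x}"
  by (auto simp: nbrs_def K_E_def)

lemma set_pmf_of_set_K_V_remove:
  assumes "y \<in> K_V v" and "y \<noteq> x"
  shows "set_pmf (pmf_of_set (K_V v - {x})) = K_V v - {x}"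
  using assms by (intro set_pmf_of_set) (auto simp: K_V_def)

lemma toward_K:
  assumes "c \<in> K_V v" and "r \<in> K_V v" and "c \<noteq> r"
  shows "toward (K_V v) K_E c r = {r}"
proof (rule toward_adjacent)
  fix y assume "y \<in> nbrs (K_V v) K_E c"
  then have "y = r \<or> (y, r) \<in> edge_rel (K_V v) K_E"
    using assms by (auto simp: nbrs_K edge_rel_def K_E_def)
  then show "(y, r) \<in> (edge_rel (K_V v) K_E)\<^sup>*" by auto
qed (use assms in \<open>auto simp: nbrs_K\<close>)

lemma round_step_K:
  assumes "(c, r) \<in> K_states v"
  shows "round_step (K_V v) K_E \<theta> (c, r) =
    pmf_of_set (K_V v - {r}) \<bind> (\<lambda>r'. if r' = c then return_pmf None
      else bernoulli_pmf \<theta> \<bind> (\<lambda>b. if b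
        then map_pmf (\<lambda>c'. if c' = r' then None else Some (c', r')) (pmf_of_set (K_V v - {c}))
        else return_pmf None))"
proof -
  have "set_pmf (pmf_of_set (K_V v - {r})) = K_V v - {r}"
    using assms by (intro set_pmf_of_set_K_V_remove[of c]) (auto simp: K_states_def)
  moreover have "toward (K_V v) K_E c r' = {r'}" if "r' \<in> K_V v - {r}" "r' \<noteq> c" for r'
    using assms that by (intro toward_K) (auto simp: K_states_def)
  ultimately show ?thesis
    unfolding round_step_def nbrs_K prod.case
    by (intro bind_pmf_cong[OF refl] if_cong[OF refl refl])
       (auto simp: pmf_of_set_singleton map_pmf_def bind_return_pmf intro!: bind_pmf_cong[OF refl])
qed

lemma set_pmf_round_step_K:
  assumes "t \<in> K_states v"
  shows "set_pmf (round_step (K_V v) K_E \<theta> t) \<subseteq> insert None (Some ` K_states v)"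
proof -
  obtain c r where t: "t = (c, r)" and c: "c \<in> K_V v" and r: "r \<in> K_V v" and "c \<noteq> r"
    using assms by (auto simp: K_states_def)
  then show ?thesis
    unfolding t round_step_K[OF assms[unfolded t]]
    by (auto simp: set_pmf_of_set_K_V_remove[OF c] set_pmf_of_set_K_V_remove[OF r] K_states_def
        split: if_splits)
qed

lemma pmf_round_step_K_None:
  assumes "0 \<le> \<theta>" and "\<theta> \<le> 1" and "t \<in> K_states v"
  shows "pmf (round_step (K_V v) K_E \<theta> t) None = K_capture_prob v \<theta>"
proof -
  obtain c r where t: "t = (c, r)" and c: "c \<in> K_V v" and r: "r \<in> K_V v" and "c \<noteq> r"
    using assms(3) by (auto simp: K_states_def)
  then have "v \<ge> 2" by (auto simp: K_V_def)
  have fin: "finite (K_V v - {x})" and card: "card (K_V v - {x}) = v - 1" if "x \<in> K_V v" for x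
    using that by (auto simp: K_V_def)
  have ne: "K_V v - {r} \<noteq> {}" "K_V v - {c} \<noteq> {}" using c r \<open>c \<noteq> r\<close> by auto
  have cop_move_None: "pmf (bernoulli_pmf \<theta> \<bind> (\<lambda>b. if b
      then map_pmf (\<lambda>c'. if c' = r' then None else Some (c', r')) (pmf_of_set (K_V v - {c}))
      else return_pmf None)) None = \<theta> / (real v - 1) + (1 - \<theta>)" if "r' \<in> K_V v - {c}" for r'
  proof -
    have "(\<lambda>c'. if c' = r' then None else Some (c', r')) -` {None} = {r'}"
      by (auto split: if_splits)
    with that have "pmf (map_pmf (\<lambda>c'. if c' = r' then None else Some (c', r'))
        (pmf_of_set (K_V v - {c}))) None = 1 / (real v - 1)"
      using fin[OF c] ne(2) card[OF c] \<open>v \<ge> 2\<close>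
      by (simp add: pmf_map measure_pmf_of_set Int_absorb1)
    with assms(1,2) show ?thesis by (simp add: pmf_bind)
  qed
  define cop_capture where "cop_capture = \<theta> / (real v - 1) + (1 - \<theta>)"
  have "pmf (round_step (K_V v) K_E \<theta> t) None =
      (\<Sum>r'\<in>K_V v - {r}. if r' = c then 1 else cop_capture) / real (v - 1)"
    unfolding t round_step_K[OF assms(3)[unfolded t]] pmf_bind
      integral_pmf_of_set[OF ne(1) fin[OF r]] card[OF r]
    using cop_move_None by (intro arg_cong2[where f = "(/)"] sum.cong) (auto simp: cop_capture_def)
  also have "(\<Sum>r'\<in>K_V v - {r}. if r' = c then 1 else cop_capture) =
      1 + (real v - 2) * cop_capture"
  proof -
    have "c \<in> K_V v - {r}" using c \<open>c \<noteq> r\<close> by simp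
    moreover have "card (K_V v - {r} - {c}) = v - 2"
      using calculation card[OF r] fin[OF r] by (simp add: card_Diff_singleton)
    ultimately show ?thesis
      using fin[OF r] \<open>v \<ge> 2\<close> by (simp add: sum.remove)
  qed
  finally show ?thesis
    using \<open>v \<ge> 2\<close> by (simp add: K_capture_prob_def cop_capture_def add_divide_distrib)
qed

lemma K_capture_prob_closed_form:
  assumes "v \<ge> 2"
  shows "K_capture_prob v \<theta> = ((real v - 1)\<^sup>2 - \<theta> * (real v - 2)\<^sup>2) / (real v - 1)\<^sup>2"
proof -
  define w where "w = real v - 1"
  have "w > 0" "real v - 2 = w - 1" using assms by (simp_all add: w_def)
  then show ?thesis
    unfolding K_capture_prob_def w_def[symmetric] by (simp add: field_simps power2_eq_square)
qed

lemma K_capture_prob_bounds: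
  assumes "v \<ge> 2" and "0 \<le> \<theta>" and "\<theta> \<le> 1"
  shows "0 < K_capture_prob v \<theta>" and "K_capture_prob v \<theta> \<le> 1"
proof -
  have "(real v - 2)\<^sup>2 < (real v - 1)\<^sup>2"
    using assms(1) by (simp add: power2_eq_square algebra_simps)
  moreover have "\<theta> * (real v - 2)\<^sup>2 \<le> (real v - 2)\<^sup>2"
    using assms(2,3) by (intro mult_left_le_one_le) auto
  ultimately show "0 < K_capture_prob v \<theta>" and "K_capture_prob v \<theta> \<le> 1"
    using assms by (auto simp: K_capture_prob_closed_form divide_le_eq_1)
qed

theorem mainTheorem3:
  fixes v :: nat and \<theta> :: real and c r :: nat
  assumes "v \<ge> 2" and "0 \<le> \<theta>" and "\<theta> \<le> 1"
    and "c \<in> K_V v" and "r \<in> K_V v" and "c \<noteq> r"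
  shows "(capture_time_prob (K_V v) K_E \<theta> (c, r)) sums 1
    \<and> (\<lambda>n. real n * capture_time_prob (K_V v) K_E \<theta> (c, r) n) sums
        (1 / (1 / (real v - 1) + (real v - 2) / (real v - 1) * (1 / (real v - 1) * \<theta> + 1 - \<theta>)))
    \<and> 1 / (1 / (real v - 1) + (real v - 2) / (real v - 1) * (1 / (real v - 1) * \<theta> + 1 - \<theta>))
        = (real v - 1)^2 / ((real v - 1)^2 - \<theta> * (real v - 2)^2)"
proof -
  define p where "p = K_capture_prob v \<theta>"
  have "(c, r) \<in> K_states v" using assms(4-6) by (simp add: K_states_def)
  then have captured: "captured_by (K_V v) K_E \<theta> (c, r) n = 1 - (1 - p) ^ n" for n
    unfolding p_def
    by (rule captured_by_eq_geometric[OF _ set_pmf_round_step_K pmf_round_step_K_None[OF assms(2,3)]])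
  have "capture_time_prob (K_V v) K_E \<theta> (c, r) (Suc n) = p * (1 - p) ^ n" for n
    using captured[of n] captured[of "Suc n"] by (simp add: capture_time_prob_def algebra_simps)
  then have "capture_time_prob (K_V v) K_E \<theta> (c, r) sums 1"
    and "(\<lambda>n. real n * capture_time_prob (K_V v) K_E \<theta> (c, r) n) sums (1 / p)"
    using K_capture_prob_bounds[OF assms(1-3)]
    by (intro shifted_geometric_sums; simp add: p_def capture_time_prob_def)+
  moreover have "1 / p = (real v - 1)\<^sup>2 / ((real v - 1)\<^sup>2 - \<theta> * (real v - 2)\<^sup>2)"
    by (simp add: p_def K_capture_prob_closed_form[OF assms(1)])
  ultimately show ?thesis
    unfolding p_def K_capture_prob_def by simp
qed

end
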